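(* Let $\Pi_n$ be a PARITY$_n$ program such that no rule $y\leftarrow B$ of $\Pi_n$ has $y\in var(B)$ and every rule body of $\Pi_n$ is consistent. Suppose $\Pi_n$ contains a rule $x\leftarrow B$ (with $x$ a variable) such that $not\ not\ x\in B$ and $S(B)=\{J\}$ for a single string $J$ which is odd. Let $\Pi_n'$ be obtained from $\Pi_n$ by replacing this rule with $x\leftarrow B\setminus\{not\ not\ x\}$. Then $Ans(\Pi_n')=$ PARITY$_n$.
   Context: A rule element is one of $\top$, $\bot$, $x$, $not\ x$, $not\ not\ x$, where $x$ is a variable. A (canonical) rule is $H\leftarrow B$ with $H$ a variable or $\bot$ and $B$ a finite set of rule elements; a canonical program is a finite set of rules. For a body $B$, $var(B)=\{e\in B: e\text{ is a variable}\}$. For a set of variables $I$: $I\models\top$; $I\not\models\bot$; $I\models x$ iff $I\models not\ not\ x$ iff $x\in I$; $I\models not\ x$ iff $x\notin I$; $I\models B$ iff $I$ satisfies every element of $B$; $I$ is closed under $H\leftarrow B$ if $I\models B$ implies $I\models H$. The reduct $\Pi^I$ replaces $not\ not\ x$ by $\top$ if $x\in I$ else $\bot$, and $not\ x$ by $\top$ if $x\notin I$ else $\bot$; $I$ is an answer set of $\Pi$ if $I$ is the least set closed under all rules of $\Pi^I$; $Ans(\Pi)$ is the set of answer sets; $var(\Pi)$ is the set of variables occurring in $\Pi$. Strings $w\in\{0,1\}^n$ are identified with $\{x_i:w_i=1\}$; PARITY$_n$ is the set of strings in $\{0,1\}^n$ with an odd number of 1's (odd strings; the others are even); a PARITY$_n$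 program is a canonical program $\Pi$ with $var(\Pi)=\{x_1,\dots,x_n\}$ and $Ans(\Pi)=$ PARITY$_n$. For a set $B$ of rule elements, $S(B)=\{I\subseteq\{x_1,\dots,x_n\}: I\models B\}$; $B$ is consistent if $S(B)\neq\emptyset$. *)

theory Defs
  imports Main
begin

text \<open>Variables x_1..x_n are represented by natural numbers 1..n.\<close>

datatype elem = ETop | EBot | EPos nat | ENot nat | ENotNot nat

datatype head = HVar nat | HBot

type_synonym rule = "head \<times> elem set"
type_synonym program = "rule set"

fun sat_elem :: "nat set \<Rightarrow> elem \<Rightarrow> bool" where
  "sat_elem I ETop = True"
| "sat_elem I EBot = False"
| "sat_elem I (EPos x) = (x \<in> I)"
| "sat_elem I (ENot x) = (x \<notin> I)"
| "sat_elem I (ENotNot x) = (x \<in> I)"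

definition sat_body :: "nat set \<Rightarrow> elem set \<Rightarrow> bool" where
  "sat_body I B = (\<forall>e\<in>B. sat_elem I e)"

fun sat_head :: "nat set \<Rightarrow> head \<Rightarrow> bool" where
  "sat_head I (HVar x) = (x \<in> I)"
| "sat_head I HBot = False"

definition closed_rule :: "nat set \<Rightarrow> rule \<Rightarrow> bool" where
  "closed_rule I r = (sat_body I (snd r) \<longrightarrow> sat_head I (fst r))"

definition closed_prog :: "nat set \<Rightarrow> program \<Rightarrow> bool" where
  "closed_prog I P = (\<forall>r\<in>P. closed_rule I r)"

fun reduct_elem :: "nat set \<Rightarrow> elem \<Rightarrow> elem" where
  "reduct_elem I (ENotNot x) = (if x \<in> I then ETop else EBot)"
| "reduct_elem I (ENot x) = (if x \<notin> I then ETop else EBot)"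
| "reduct_elem I e = e"

definition reduct :: "program \<Rightarrow> nat set \<Rightarrow> program" where
  "reduct P I = (\<lambda>(h, B). (h, reduct_elem I ` B)) ` P"

definition is_answer_set :: "program \<Rightarrow> nat set \<Rightarrow> bool" where
  "is_answer_set P I = (closed_prog I (reduct P I) \<and>
      (\<forall>J. closed_prog J (reduct P I) \<longrightarrow> I \<subseteq> J))"

definition Ans :: "program \<Rightarrow> nat set set" where
  "Ans P = {I. is_answer_set P I}"

fun elem_vars :: "elem \<Rightarrow> nat set" where
  "elem_vars (EPos x) = {x}"
| "elem_vars (ENot x) = {x}"
| "elem_vars (ENotNot x) = {x}"
| "elem_vars _ = {}"

fun head_vars :: "head \<Rightarrow> nat set" where
  "head_vars (HVar x) = {x}"
| "head_vars HBot = {}"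

definition prog_vars :: "program \<Rightarrow> nat set" where
  "prog_vars P = (\<Union>(h, B)\<in>P. head_vars h \<union> (\<Union>e\<in>B. elem_vars e))"

text \<open>var(B): the variables occurring positively (as plain elements) in B.\<close>
definition body_var :: "elem set \<Rightarrow> nat set" where
  "body_var B = {x. EPos x \<in> B}"

definition canonical_program :: "program \<Rightarrow> bool" where
  "canonical_program P = (finite P \<and> (\<forall>r\<in>P. finite (snd r)))"

definition PARITY :: "nat \<Rightarrow> nat set set" where
  "PARITY n = {I. I \<subseteq> {1..n} \<and> odd (card I)}"

definition parity_program :: "nat \<Rightarrow> program \<Rightarrow> bool" where
  "parity_program n P = (canonical_program P \<and> prog_vars P = {1..n} \<and> Ans P = PARITY n)"

definition S :: "nat \<Rightarrow> elem set \<Rightarrow> nat set set" where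
  "S n B = {I. I \<subseteq> {1..n} \<and> sat_body I B}"

definition consistent :: "nat \<Rightarrow> elem set \<Rightarrow> bool" where
  "consistent n B = (S n B \<noteq> {})"

end

theory Submission
  imports Defs
begin

text \<open>Write \<open>B = B' \<union> {not not x}\<close> and let \<open>R\<close> be the program without the rule \<open>x \<leftarrow> B\<close>.
If \<open>x \<in> I\<close>, the reducts of \<open>B\<close> and \<open>B'\<close> coincide, so nothing changes. If \<open>x \<notin> I\<close>, the rule
\<open>x \<leftarrow> B\<close> reduces to a rule with body \<open>\<bottom>\<close>, so \<open>I\<close> is an answer set of \<open>\<Pi>\<close> iff it is one of \<open>R\<close>,
whereas it is an answer set of \<open>\<Pi>'\<close> iff it is one of \<open>R\<close> and \<open>I \<not>\<Turnstile> B'\<close>. The extra condition is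
automatic for odd \<open>I\<close>: if \<open>I \<Turnstile> B'\<close> then \<open>I \<union> {x} \<Turnstile> B\<close>, hence \<open>I \<union> {x} = J\<close> and \<open>I = J - {x}\<close>
would be even.\<close>

lemma closed_prog_reduct_iff:
  "closed_prog K (reduct Q I) \<longleftrightarrow>
     (\<forall>(h, C)\<in>Q. sat_body K (reduct_elem I ` C) \<longrightarrow> sat_head K h)"
  unfolding closed_prog_def reduct_def closed_rule_def by auto

lemma closed_prog_reduct_insert:
  "closed_prog K (reduct (insert (h, C) Q) I) \<longleftrightarrow>
     closed_prog K (reduct Q I) \<and> (sat_body K (reduct_elem I ` C) \<longrightarrow> sat_head K h)"
  unfolding closed_prog_reduct_iff by auto

lemma sat_body_reduct_self: "sat_body I (reduct_elem I ` C) \<longleftrightarrow> sat_body I C"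
proof -
  have "sat_elem I (reduct_elem I e) = sat_elem I e" for e
    by (cases e) auto
  then show ?thesis
    unfolding sat_body_def by auto
qed

lemma sat_body_reduct_mono:
  assumes "K \<subseteq> L" and "sat_body K (reduct_elem I ` C)"
  shows "sat_body L (reduct_elem I ` C)"
proof -
  have "sat_elem K (reduct_elem I e) \<Longrightarrow> sat_elem L (reduct_elem I e)" for e
    using assms(1) by (cases e) (auto split: if_splits)
  then show ?thesis
    using assms(2) unfolding sat_body_def by blast
qed

lemma closed_prog_reduct_Int:
  assumes "closed_prog K (reduct Q I)" and "closed_prog L (reduct Q I)"
  shows "closed_prog (K \<inter> L) (reduct Q I)"
proof -
  have "sat_head (K \<inter> L) h" if "sat_head K h" and "sat_head L h" for h
    using that by (cases h) auto
  then show ?thesis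
    using assms unfolding closed_prog_reduct_iff
    by (fastforce intro: sat_body_reduct_mono[of "K \<inter> L"])
qed

lemma is_answer_set_insert_ENotNot_mem:
  assumes "x \<in> I"
  shows "is_answer_set (insert (h, insert (ENotNot x) C) Q) I \<longleftrightarrow>
         is_answer_set (insert (h, C) Q) I"
proof -
  have "sat_body K (reduct_elem I ` insert (ENotNot x) C) \<longleftrightarrow> sat_body K (reduct_elem I ` C)" for K
    using assms unfolding sat_body_def by simp
  then show ?thesis
    unfolding is_answer_set_def closed_prog_reduct_insert by simp
qed

lemma is_answer_set_insert_ENotNot_not_mem:
  assumes "x \<notin> I"
  shows "is_answer_set (insert (h, insert (ENotNot x) C) Q) I \<longleftrightarrow> is_answer_set Q I"
proof -
  have "\<not> sat_body K (reduct_elem I ` insert (ENotNot x) C)" for K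
    using assms unfolding sat_body_def by force
  then show ?thesis
    unfolding is_answer_set_def closed_prog_reduct_insert by simp
qed

text \<open>Minimality survives adding the rule because any \<open>K\<close> closed under the smaller reduct can be
cut down to \<open>K \<inter> I\<close>, which no longer satisfies the body of the new rule.\<close>

lemma is_answer_set_insert_false_head:
  assumes "\<not> sat_head I h"
  shows "is_answer_set (insert (h, C) Q) I \<longleftrightarrow> is_answer_set Q I \<and> \<not> sat_body I C"
proof
  assume A: "is_answer_set (insert (h, C) Q) I"
  then have closed: "closed_prog I (reduct Q I)" and unsat: "\<not> sat_body I C"
    using assms unfolding is_answer_set_def closed_prog_reduct_insert sat_body_reduct_self
    by auto
  have "I \<subseteq> K" if K: "closed_prog K (reduct Q I)" for K
  proof -
    have "\<not> sat_body (K \<inter> I) (reduct_elem I ` C)"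
      using unsat sat_body_reduct_mono[of "K \<inter> I" I I C] unfolding sat_body_reduct_self by blast
    then have "closed_prog (K \<inter> I) (reduct (insert (h, C) Q) I)"
      using closed_prog_reduct_Int[OF K closed] unfolding closed_prog_reduct_insert by blast
    then show ?thesis
      using A unfolding is_answer_set_def by blast
  qed
  then show "is_answer_set Q I \<and> \<not> sat_body I C"
    using closed unsat unfolding is_answer_set_def by blast
next
  assume "is_answer_set Q I \<and> \<not> sat_body I C"
  then show "is_answer_set (insert (h, C) Q) I"
    unfolding is_answer_set_def closed_prog_reduct_insert sat_body_reduct_self by blast
qed

lemma sat_body_insert_var:
  assumes "sat_body I C" and "ENot x \<notin> C"
  shows "sat_body (insert x I) C"
proof -
  have "sat_elem I e \<Longrightarrow> e \<noteq> ENot x \<Longrightarrow> sat_elem (insert x I) e" for e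
    by (cases e) auto
  then show ?thesis
    using assms unfolding sat_body_def by blast
qed

lemma odd_not_sat_body_of_unique_odd_model:
  assumes S: "S n (insert (ENotNot x) C) = {J}" and "odd (card J)"
    and I: "I \<in> PARITY n" and "x \<notin> I"
  shows "\<not> sat_body I C"
proof
  assume sat: "sat_body I C"
  have J: "J \<subseteq> {1..n}" "sat_body J (insert (ENotNot x) C)"
    using S unfolding S_def by auto
  then have "x \<in> J" and "ENot x \<notin> C"
    unfolding sat_body_def by force+
  then have "sat_body (insert x I) (insert (ENotNot x) C)"
    using sat_body_insert_var[OF sat] unfolding sat_body_def by simp
  moreover have "insert x I \<subseteq> {1..n}"
    using I J(1) \<open>x \<in> J\<close> unfolding PARITY_def by auto
  ultimately have "insert x I \<in> S n (insert (ENotNot x) C)"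
    unfolding S_def by blast
  then have "insert x I = J"
    using S by simp
  moreover have "finite J"
    using J(1) finite_subset by blast
  ultimately have "card J = Suc (card I)"
    using \<open>x \<notin> I\<close> by auto
  then show False
    using \<open>odd (card J)\<close> I unfolding PARITY_def by simp
qed

theorem mainTheorem11:
  fixes n :: nat and P :: program and x :: nat and B :: "elem set" and J :: "nat set"
  assumes "parity_program n P"
    and "\<forall>y C. (HVar y, C) \<in> P \<longrightarrow> y \<notin> body_var C"
    and "\<forall>r\<in>P. consistent n (snd r)"
    and "(HVar x, B) \<in> P"
    and "ENotNot x \<in> B"
    and "S n B = {J}"
    and "odd (card J)"
  shows "Ans ((P - {(HVar x, B)}) \<union> {(HVar x, B - {ENotNot x})}) = PARITY n"
proof -
  define R where "R = P - {(HVar x, B)}"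
  define B' where "B' = B - {ENotNot x}"
  have B: "B = insert (ENotNot x) B'"
    using assms(5) unfolding B'_def by blast
  have P: "P = insert (HVar x, insert (ENotNot x) B') R"
    using assms(4) unfolding R_def B[symmetric] by blast
  have AnsP: "Ans P = PARITY n"
    using assms(1) unfolding parity_program_def by blast
  have "is_answer_set (insert (HVar x, B') R) I \<longleftrightarrow> is_answer_set P I" for I
  proof (cases "x \<in> I")
    case True
    then show ?thesis
      unfolding P by (rule is_answer_set_insert_ENotNot_mem[symmetric])
  next
    case False
    have "is_answer_set P I \<Longrightarrow> \<not> sat_body I B'"
      using odd_not_sat_body_of_unique_odd_model[of n x B' J I] assms(6,7) False AnsP
      unfolding B Ans_def by blast
    then show ?thesis
      using False is_answer_set_insert_false_head[of I "HVar x" B' R]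
        is_answer_set_insert_ENotNot_not_mem[of x I "HVar x" B' R]
      unfolding P by auto
  qed
  then show ?thesis
    using AnsP unfolding Ans_def R_def B'_def by auto
qed

end
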